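(* Let $\widetilde{\mathcal R}\subseteq\mathcal R$ be finite and let $\mathcal R_1,\mathcal R_2$ be produced from $\widetilde{\mathcal R}$ by the selection procedure. Then: (i) $\mathcal R_1\sqcup\mathcal R_2=\widetilde{\mathcal R}$ and $\big|\bigcup_{R\in\mathcal R_2}R\big|\le 25\sum_{R\in\mathcal R_1}|R|$; (ii) whenever $R,R'\in\mathcal R_1$ are distinct, $R\cap R'\neq\emptyset$ and $L(R)\le L(R')$, we have $\mathrm{slope}(R)\not\supseteq\mathrm{slope}(R')$.
   Context: Dyadic model. Fix $0<\delta\le1$ and $w=2^{-m}$ for an integer $m\ge1$. All dyadic intervals are half-open, $[j2^{-k},(j+1)2^{-k})$. For $k\ge0$, $S_k$ is the set of dyadic subintervals of $[0,1)$ of length $2^{-k}$ (slopes); $c_s$ is the center of $s$. Let $u:[0,1)\to S_m$ be measurable. Let $\mathcal D$ be the dyadic intervals $I\subseteq[0,1)$ with $|I|\ge w$, $k(I)=\log_2(|I|/w)$, $\mathrm{Pop}_I(s)=\frac1{|I|}|\{x\in I:u(x)\subseteq s\}|$, $S(I)=\{s\in S_{k(I)}:\mathrm{Pop}_I(s)\ge\delta\}$. The parallelogram $P(I,s,b)=\{(x,y):x\in I,\ b\le y-c_sx<b+w\}$ ($I\in\mathcal D$, $s\in S_{k(I)}$, $b\in\mathbb R$) has $\mathrm{int}(P)=I$, $\mathrm{slope}(P)=s$, $L(P)=|I|$; $\mathcal R$ is the collection of these with $s\in S(I)$. For such $R$ with center $(x_0,y_0)$, $5R=\{(x,y):|x-x_0|\le\tfrac52|I|,\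 |y-y_0-c_s(x-x_0)|\le\tfrac52 w\}$. Selection procedure: start with $\mathcal R_1=\mathcal R_2=\emptyset$; while $\widetilde{\mathcal R}\ne\emptyset$, choose $R\in\widetilde{\mathcal R}$ of maximal length $L(R)$, move it from $\widetilde{\mathcal R}$ to $\mathcal R_1$, and then move to $\mathcal R_2$ every $R'\in\widetilde{\mathcal R}$ with $R'\subseteq\bigcup_{R''\in\mathcal R_1}5R''$. *)

theory Defs
  imports "HOL-Analysis.Analysis"
begin

text \<open>Dyadic intervals are encoded as pairs (k, j), standing for [j 2^-k, (j+1) 2^-k).\<close>

type_synonym dyad = "nat \<times> nat"

definition dyint :: "dyad \<Rightarrow> real set" where
  "dyint d = {real (snd d) / 2 ^ fst d ..< (real (snd d) + 1) / 2 ^ fst d}"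

definition dlen :: "dyad \<Rightarrow> real" where
  "dlen d = 1 / 2 ^ fst d"

definition dcen :: "dyad \<Rightarrow> real" where
  "dcen d = (real (snd d) + 1/2) / 2 ^ fst d"

definition Sk :: "nat \<Rightarrow> dyad set" where
  "Sk k = {(k, j) | j. j < 2 ^ k}"

definition wid :: "nat \<Rightarrow> real" where
  "wid m = 1 / 2 ^ m"

definition Dcal :: "nat \<Rightarrow> dyad set" where
  "Dcal m = {(k, j) | k j. k \<le> m \<and> j < 2 ^ k}"

text \<open>k(I) = log2(|I|/w).\<close>
definition kI :: "nat \<Rightarrow> dyad \<Rightarrow> nat" where
  "kI m I = m - fst I"

definition Pop :: "(real \<Rightarrow> dyad) \<Rightarrow> dyad \<Rightarrow> dyad \<Rightarrow> real" where
  "Pop u I s = measure lebesgue {x \<in> dyint I. dyint (u x) \<subseteq> dyint s} / dlen I"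

definition SI :: "real \<Rightarrow> nat \<Rightarrow> (real \<Rightarrow> dyad) \<Rightarrow> dyad \<Rightarrow> dyad set" where
  "SI \<delta> m u I = {s \<in> Sk (kI m I). Pop u I s \<ge> \<delta>}"

text \<open>A parallelogram P(I,s,b) is encoded by the triple (I, s, b).\<close>
type_synonym para = "dyad \<times> dyad \<times> real"

definition pint :: "para \<Rightarrow> dyad" where "pint R = fst R"
definition pslope :: "para \<Rightarrow> dyad" where "pslope R = fst (snd R)"
definition poff :: "para \<Rightarrow> real" where "poff R = snd (snd R)"
definition pL :: "para \<Rightarrow> real" where "pL R = dlen (pint R)"

definition pset :: "nat \<Rightarrow> para \<Rightarrow> (real \<times> real) set" where
  "pset m R = {(x, y). x \<in> dyint (pint R) \<and>
       poff R \<le> y - dcen (pslope R) * x \<and> y - dcen (pslope R) * x < poff R + wid m}"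

definition Rcal :: "real \<Rightarrow> nat \<Rightarrow> (real \<Rightarrow> dyad) \<Rightarrow> para set" where
  "Rcal \<delta> m u = {R. pint R \<in> Dcal m \<and> pslope R \<in> SI \<delta> m u (pint R)}"

definition five :: "nat \<Rightarrow> para \<Rightarrow> (real \<times> real) set" where
  "five m R = (let x0 = dcen (pint R);
                   c = dcen (pslope R);
                   y0 = poff R + wid m / 2 + c * x0
               in {(x, y). \<bar>x - x0\<bar> \<le> 5/2 * dlen (pint R) \<and>
                           \<bar>y - y0 - c * (x - x0)\<bar> \<le> 5/2 * wid m})"

text \<open>One iteration of the selection procedure, on states (Rtilde, R1, R2).\<close>
definition sel_step :: "nat \<Rightarrow> para set \<times> para set \<times> para set \<Rightarrow>
                         para set \<times> para set \<times> para set \<Rightarrow> bool" where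
  "sel_step m st st' \<longleftrightarrow>
     (let T = fst st; A = fst (snd st); B = snd (snd st) in
      \<exists>R\<in>T. (\<forall>R'\<in>T. pL R' \<le> pL R) \<and>
        (let A' = insert R A;
             moved = {R' \<in> T - {R}. pset m R' \<subseteq> (\<Union>R''\<in>A'. five m R'')}
         in st' = (T - {R} - moved, A', B \<union> moved)))"

definition selection :: "nat \<Rightarrow> para set \<Rightarrow> para set \<Rightarrow> para set \<Rightarrow> bool" where
  "selection m Rt R1 R2 \<longleftrightarrow> (sel_step m)\<^sup>*\<^sup>* (Rt, {}, {}) ({}, R1, R2)"

end

theory Submission
  imports Defs
begin

(* Let the selection procedure run and track an invariant on its
   states (Rtilde, R1, R2): the three sets partition the input; every moved
   parallelogram lies in the union of the 5-fold enlargements of the selected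
   ones; every selected parallelogram is at least as long as, and its
   enlargement does not contain, any parallelogram still waiting; and the
   selected ones satisfy the slope condition (ii).  The only non-bookkeeping
   step is the preservation of (ii): if a shorter parallelogram R meets Q and
   their slopes are nested, then |c_R - c_Q| |I_R| <= w/2 (by the relation
   |slope| |I| = w for members of the collection), and a short computation in
   sheared coordinates gives R within 5Q, so R would have been discarded.
   At a final state, (i) follows from the covering property once we know
   |5Q| = 25 |Q|; both areas are computed as sheared boxes X x Y, whose
   Lebesgue measure is |X| |Y| by Tonelli and translation invariance. *)

definition sheared_box :: "real set \<Rightarrow> real set \<Rightarrow> real \<Rightarrow> (real \<times> real) set" where
  "sheared_box X Y k = {(x, y). x \<in> X \<and> y - k * x \<in> Y}"

lemma sheared_box_sets_pair:
  assumes "X \<in> sets borel" "Y \<in> sets borel"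
  shows "sheared_box X Y k \<in> sets (lborel \<Otimes>\<^sub>M lborel)"
proof -
  have "sheared_box X Y k = {p \<in> space (lborel \<Otimes>\<^sub>M lborel). fst p \<in> X \<and> snd p - k * fst p \<in> Y}"
    by (auto simp: sheared_box_def space_pair_measure)
  also have "\<dots> \<in> sets (lborel \<Otimes>\<^sub>M lborel)"
    using assms by measurable
  finally show ?thesis .
qed

lemma sheared_box_sets:
  assumes "X \<in> sets borel" "Y \<in> sets borel"
  shows "sheared_box X Y k \<in> sets lborel"
  using sheared_box_sets_pair[OF assms] by (metis lborel_prod)

lemma emeasure_lborel_translate:
  assumes "Y \<in> sets borel"
  shows "emeasure lborel {y :: real. y - t \<in> Y} = emeasure lborel Y"
proof -
  have "{y. y - t \<in> Y} = (+) (- t) -` Y \<inter> space lborel" by auto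
  then have "emeasure lborel {y. y - t \<in> Y} = emeasure (distr lborel borel ((+) (- t))) Y"
    using assms by (simp add: emeasure_distr)
  then show ?thesis by (simp add: lborel_distr_plus)
qed

text \<open>Shearing preserves area: by Tonelli, each vertical section is a translate of Y.\<close>
lemma emeasure_sheared_box:
  assumes X: "X \<in> sets borel" and Y: "Y \<in> sets borel"
  shows "emeasure lborel (sheared_box X Y k) = emeasure lborel X * emeasure lborel Y"
proof -
  have meas: "sheared_box X Y k \<in> sets (lborel \<Otimes>\<^sub>M lborel)"
    by (rule sheared_box_sets_pair[OF X Y])
  have "emeasure lborel (sheared_box X Y k) = emeasure (lborel \<Otimes>\<^sub>M lborel) (sheared_box X Y k)"
    by (simp add: lborel_prod)
  also have "\<dots> = (\<integral>\<^sup>+x. emeasure lborel (Pair x -` sheared_box X Y k) \<partial>lborel)"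
    by (rule lborel.emeasure_pair_measure_alt[OF meas])
  also have "\<dots> = (\<integral>\<^sup>+x. emeasure lborel Y * indicator X x \<partial>lborel)"
  proof (rule nn_integral_cong)
    fix x :: real
    have "Pair x -` sheared_box X Y k = (if x \<in> X then {y. y - k * x \<in> Y} else {})"
      by (auto simp: sheared_box_def)
    then show "emeasure lborel (Pair x -` sheared_box X Y k) = emeasure lborel Y * indicator X x"
      using emeasure_lborel_translate[OF Y] by simp
  qed
  also have "\<dots> = emeasure lborel Y * emeasure lborel X"
    using X by (simp add: nn_integral_cmult_indicator)
  finally show ?thesis by (simp add: mult.commute)
qed

lemma dyint_Ico: "dyint d = {real (snd d) / 2 ^ fst d ..< real (snd d) / 2 ^ fst d + dlen d}"
  by (simp add: dyint_def dlen_def add_divide_distrib)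

lemma dlen_pos: "dlen d > 0"
  by (simp add: dlen_def)

lemma wid_pos: "wid m > 0"
  by (simp add: wid_def)

lemma pset_sheared_box:
  "pset m R = sheared_box (dyint (pint R)) {poff R ..< poff R + wid m} (dcen (pslope R))"
  by (auto simp: pset_def sheared_box_def)

lemma five_sheared_box:
  "five m R = sheared_box {dcen (pint R) - 5/2 * dlen (pint R) .. dcen (pint R) + 5/2 * dlen (pint R)}
     {poff R + wid m / 2 - 5/2 * wid m .. poff R + wid m / 2 + 5/2 * wid m} (dcen (pslope R))"
  unfolding five_def sheared_box_def Let_def abs_le_iff by (auto simp: algebra_simps)

lemma pset_sets: "pset m R \<in> sets lborel"
  unfolding pset_sheared_box by (rule sheared_box_sets) (auto simp: dyint_def)

lemma five_sets: "five m R \<in> sets lborel"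
  unfolding five_sheared_box by (rule sheared_box_sets) auto

lemma emeasure_pset: "emeasure lborel (pset m R) = ennreal (pL R * wid m)"
  using dlen_pos[of "pint R"] wid_pos[of m]
  by (simp add: pset_sheared_box emeasure_sheared_box dyint_Ico pL_def ennreal_mult)

lemma emeasure_five: "emeasure lborel (five m R) = ennreal (25 * (pL R * wid m))"
  using dlen_pos[of "pint R"] wid_pos[of m]
  by (simp add: five_sheared_box emeasure_sheared_box pL_def ennreal_mult[symmetric])

lemma five_fmeasurable: "five m R \<in> fmeasurable lborel"
  by (rule fmeasurableI[OF five_sets]) (simp add: emeasure_five)

lemma measure_five: "measure lborel (five m R) = 25 * measure lborel (pset m R)"
  using dlen_pos[of "pint R"] wid_pos[of m]
  by (simp add: measure_def emeasure_five emeasure_pset pL_def)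

lemma dcen_eq: "dcen d = real (snd d) / 2 ^ fst d + dlen d / 2"
  by (simp add: dcen_def dlen_def add_divide_distrib)

lemma dist_dcen:
  assumes "x \<in> dyint d" shows "\<bar>x - dcen d\<bar> \<le> dlen d / 2"
proof -
  have "real (snd d) / 2 ^ fst d \<le> x" "x < real (snd d) / 2 ^ fst d + dlen d"
    using assms by (simp_all add: dyint_Ico)
  then show ?thesis unfolding dcen_eq abs_le_iff by linarith
qed

lemma dist_in_dyint: "x \<in> dyint d \<Longrightarrow> p \<in> dyint d \<Longrightarrow> \<bar>x - p\<bar> \<le> dlen d"
  by (simp add: dyint_Ico abs_le_iff)

lemma dcen_nested:
  assumes "dyint s \<subseteq> dyint s'" shows "\<bar>dcen s - dcen s'\<bar> \<le> dlen s' / 2"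
proof -
  have "dcen s \<in> dyint s"
    using dlen_pos[of s] by (simp add: dyint_Ico dcen_eq)
  then show ?thesis using assms dist_dcen[of "dcen s" s'] by auto
qed

lemma slope_len_times_len:
  assumes "R \<in> Rcal \<delta> m u"
  shows "dlen (pslope R) * pL R = wid m"
proof -
  have "fst (pint R) \<le> m" "fst (pslope R) = m - fst (pint R)"
    using assms by (auto simp: Rcal_def Dcal_def SI_def Sk_def kI_def)
  then have "(2::real) ^ fst (pslope R) * 2 ^ fst (pint R) = 2 ^ m"
    by (simp add: power_add[symmetric])
  then show ?thesis by (simp add: dlen_def wid_def pL_def)
qed

lemma pset_subset_five:
  assumes common: "(p, q) \<in> pset m P" "(p, q) \<in> pset m Q"
    and len: "pL P \<le> 2 * pL Q"
    and slope: "\<bar>dcen (pslope P) - dcen (pslope Q)\<bar> * pL P \<le> wid m"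
  shows "pset m P \<subseteq> five m Q"
proof clarify
  fix x y assume xy: "(x, y) \<in> pset m P"
  define c c' w where "c = dcen (pslope Q)" and "c' = dcen (pslope P)" and "w = wid m"
  have x: "x \<in> dyint (pint P)" "poff P \<le> y - c' * x" "y - c' * x < poff P + w"
    using xy by (auto simp: pset_def c'_def w_def)
  have pP: "p \<in> dyint (pint P)" "poff P \<le> q - c' * p" "q - c' * p < poff P + w"
    using common(1) by (auto simp: pset_def c'_def w_def)
  have pQ: "p \<in> dyint (pint Q)" "poff Q \<le> q - c * p" "q - c * p < poff Q + w"
    using common(2) by (auto simp: pset_def c_def w_def)
  have dx: "\<bar>x - p\<bar> \<le> pL P"
    using dist_in_dyint[OF x(1) pP(1)] by (simp add: pL_def)
  have "\<bar>p - dcen (pint Q)\<bar> \<le> pL Q / 2"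
    using dist_dcen[OF pQ(1)] by (simp add: pL_def)
  then have horizontal: "\<bar>x - dcen (pint Q)\<bar> \<le> 5/2 * dlen (pint Q)"
    using dx len unfolding pL_def by linarith
  have "\<bar>(c' - c) * (x - p)\<bar> \<le> \<bar>c' - c\<bar> * pL P"
    unfolding abs_mult by (rule mult_left_mono[OF dx]) simp
  then have shear: "\<bar>(c' - c) * (x - p)\<bar> \<le> w"
    using slope by (simp add: c_def c'_def w_def)
  have "y - (poff Q + w/2 + c * dcen (pint Q)) - c * (x - dcen (pint Q))
        = (y - c' * x) - (q - c' * p) + (c' - c) * (x - p) + (q - c * p - poff Q - w/2)"
    by (simp add: algebra_simps)
  then have vertical: "\<bar>y - (poff Q + w/2 + c * dcen (pint Q)) - c * (x - dcen (pint Q))\<bar> \<le> 5/2 * w"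
    using x(2,3) pP(2,3) pQ(2,3) shear[unfolded abs_le_iff] unfolding abs_le_iff by linarith
  show "(x, y) \<in> five m Q"
    using horizontal vertical by (simp add: five_def Let_def c_def w_def)
qed

lemma nested_slopes_in_five:
  assumes R: "R \<in> Rcal \<delta> m u" and Q: "Q \<in> Rcal \<delta> m u"
    and meet: "pset m R \<inter> pset m Q \<noteq> {}" and shorter: "pL R \<le> pL Q"
    and nested: "dyint (pslope Q) \<subseteq> dyint (pslope R) \<or> dyint (pslope R) \<subseteq> dyint (pslope Q)"
  shows "pset m R \<subseteq> five m Q"
proof -
  obtain p q where pq: "(p, q) \<in> pset m R" "(p, q) \<in> pset m Q"
    using meet by auto
  have "\<bar>dcen (pslope R) - dcen (pslope Q)\<bar> * pL R \<le> wid m / 2"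
    using nested
  proof
    assume "dyint (pslope Q) \<subseteq> dyint (pslope R)"
    then have "\<bar>dcen (pslope R) - dcen (pslope Q)\<bar> \<le> dlen (pslope R) / 2"
      using dcen_nested[of "pslope Q" "pslope R"] by (simp add: abs_minus_commute)
    then have "\<bar>dcen (pslope R) - dcen (pslope Q)\<bar> * pL R \<le> dlen (pslope R) / 2 * pL R"
      using dlen_pos by (simp add: pL_def)
    then show ?thesis using slope_len_times_len[OF R] by simp
  next
    assume "dyint (pslope R) \<subseteq> dyint (pslope Q)"
    then have "\<bar>dcen (pslope R) - dcen (pslope Q)\<bar> \<le> dlen (pslope Q) / 2"
      by (rule dcen_nested)
    then have "\<bar>dcen (pslope R) - dcen (pslope Q)\<bar> * pL R \<le> dlen (pslope Q) / 2 * pL Q"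
      using shorter by (intro mult_mono) (auto simp: pL_def less_imp_le[OF dlen_pos])
    then show ?thesis using slope_len_times_len[OF Q] by simp
  qed
  then show ?thesis
    using pset_subset_five[OF pq] shorter wid_pos[of m] dlen_pos[of "pint R"]
    by (simp add: pL_def)
qed

definition slope_separated :: "nat \<Rightarrow> para set \<Rightarrow> bool" where
  "slope_separated m A \<longleftrightarrow> (\<forall>R\<in>A. \<forall>R'\<in>A.
     R \<noteq> R' \<and> pset m R \<inter> pset m R' \<noteq> {} \<and> pL R \<le> pL R' \<longrightarrow>
     \<not> (dyint (pslope R') \<subseteq> dyint (pslope R)))"

lemma slope_separated_insert:
  assumes A: "A \<subseteq> Rcal \<delta> m u" and R: "R \<in> Rcal \<delta> m u"
    and sep: "slope_separated m A"
    and new: "\<forall>Q\<in>A. pL R \<le> pL Q \<and> \<not> pset m R \<subseteq> five m Q"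
  shows "slope_separated m (insert R A)"
proof -
  have unnested: "\<not> dyint (pslope Q) \<subseteq> dyint (pslope R) \<and> \<not> dyint (pslope R) \<subseteq> dyint (pslope Q)"
    if "Q \<in> A" "pset m R \<inter> pset m Q \<noteq> {}" for Q
    using nested_slopes_in_five[OF R, of Q] that A new by blast
  show ?thesis
    using sep unfolding slope_separated_def
    by (metis Int_commute insertE unnested)
qed

fun sel_inv :: "nat \<Rightarrow> para set \<Rightarrow> para set \<times> para set \<times> para set \<Rightarrow> bool" where
  "sel_inv m Rt (T, A, B) \<longleftrightarrow>
     T \<union> A \<union> B = Rt \<and> T \<inter> A = {} \<and> T \<inter> B = {} \<and> A \<inter> B = {} \<and>
     (\<forall>R\<in>B. pset m R \<subseteq> (\<Union>Q\<in>A. five m Q)) \<and>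
     (\<forall>Q\<in>A. \<forall>R\<in>T. pL R \<le> pL Q \<and> \<not> pset m R \<subseteq> five m Q) \<and>
     slope_separated m A"

lemma sel_inv_step:
  assumes Rt: "Rt \<subseteq> Rcal \<delta> m u"
    and step: "sel_step m (T, A, B) st'" and inv: "sel_inv m Rt (T, A, B)"
  shows "sel_inv m Rt st'"
proof -
  obtain R where R: "R \<in> T" and longest: "\<forall>R'\<in>T. pL R' \<le> pL R"
    and st': "st' = (T - {R} - {R' \<in> T - {R}. pset m R' \<subseteq> (\<Union>Q\<in>insert R A. five m Q)},
                 insert R A, B \<union> {R' \<in> T - {R}. pset m R' \<subseteq> (\<Union>Q\<in>insert R A. five m Q)})"
    using step unfolding sel_step_def Let_def by auto
  have "slope_separated m (insert R A)"
    using inv R Rt by (intro slope_separated_insert[of A \<delta> m u]) auto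
  then show ?thesis
    using inv R longest unfolding st' by auto
qed

lemma sel_inv_run:
  assumes "(sel_step m)\<^sup>*\<^sup>* st st'" "Rt \<subseteq> Rcal \<delta> m u" "sel_inv m Rt st"
  shows "sel_inv m Rt st'"
  using assms(1,3)
proof (induction rule: rtranclp_induct)
  case base
  then show ?case .
next
  case (step st'' st')
  then show ?case
    using sel_inv_step[OF assms(2)] by (cases st'') auto
qed

theorem mainTheorem4:
  fixes \<delta> :: real and m :: nat and u :: "real \<Rightarrow> dyad"
    and Rt R1 R2 :: "para set"
  assumes "0 < \<delta>" and "\<delta> \<le> 1" and "m \<ge> 1"
    and "\<forall>x\<in>{0..<1}. u x \<in> Sk m"
    and "\<forall>s. {x \<in> {0..<1}. u x = s} \<in> sets lebesgue"
    and "finite Rt" and "Rt \<subseteq> Rcal \<delta> m u"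
    and "selection m Rt R1 R2"
  shows "(R1 \<union> R2 = Rt \<and> R1 \<inter> R2 = {} \<and>
          measure lborel (\<Union>R\<in>R2. pset m R) \<le> 25 * (\<Sum>R\<in>R1. measure lborel (pset m R)))
       \<and> (\<forall>R\<in>R1. \<forall>R'\<in>R1. R \<noteq> R' \<and> pset m R \<inter> pset m R' \<noteq> {} \<and> pL R \<le> pL R' \<longrightarrow>
             \<not> (dyint (pslope R') \<subseteq> dyint (pslope R)))"
proof -
  have "sel_inv m Rt (Rt, {}, {})"
    by (simp add: slope_separated_def)
  then have "sel_inv m Rt ({}, R1, R2)"
    using sel_inv_run assms(7,8) unfolding selection_def by blast
  then have partition: "R1 \<union> R2 = Rt" "R1 \<inter> R2 = {}"
    and covered: "(\<Union>R\<in>R2. pset m R) \<subseteq> (\<Union>Q\<in>R1. five m Q)"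
    and separated: "slope_separated m R1"
    by auto
  have finite: "finite R1" "finite R2"
    using partition assms(6) by auto
  have "measure lborel (\<Union>R\<in>R2. pset m R) \<le> measure lborel (\<Union>Q\<in>R1. five m Q)"
    using covered finite pset_sets five_fmeasurable
    by (intro measure_mono_fmeasurable fmeasurable.finite_UN) auto
  also have "\<dots> \<le> (\<Sum>Q\<in>R1. measure lborel (five m Q))"
    using finite(1) five_sets by (rule measure_UNION_le)
  also have "\<dots> = 25 * (\<Sum>R\<in>R1. measure lborel (pset m R))"
    by (simp add: measure_five sum_distrib_left)
  finally show ?thesis
    using partition separated unfolding slope_separated_def by blast
qed

end
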